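(* Let $p=\alpha(\alpha+1)>2$, $c_p=\frac{1+z_p}{1-z_p}$, $a_p=h_{c_p}'(z_p)/L_\alpha'(z_p)$, and $$g_p(s)=\begin{cases}a_pL_\alpha(s),& s\in[z_p,1],\\ h_{c_p}(s),& s\in[-1,z_p].\end{cases}$$ Then $g_p$ is $C^1$ on $[-1,1]$, $g_p\ge h_{c_p}$, and for $s\in(-1,1)\setminus\{z_p\}$: $$Dg_p(s):=(1-s^2)g_p''-2sg_p'+pg_p\le0,\qquad \frac{Dg_p(s)}{1-s^2}+Kg_p(s)\le0,$$ where $Kg=p(p-1)g-2(p-1)sg'-(1-s^2)g''$. Consequently, the function $\phi(x,y)=(x+y)^p g_p\big(\frac{y-x}{x+y}\big)$ satisfies $\phi(x,y)\ge y^p-c_p^px^p$ for $x,y\ge0$, $(x,y)\ne(0,0)$, and for all $x,y>0$ with $\frac{y-x}{x+y}\ne z_p$ and all vectors $h,k\in\mathbb R^2$ with $|k|\le|h|$: $$\Big(\frac1x\phi_x+\phi_{xx}\Big)|h|^2+2\phi_{xy}\,(h\cdot k)+\Big(\phi_{yy}+\frac1y\phi_y\Big)|k|^2\le0 .$$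
   Context: $L_\alpha$ is the solution on $(-1,1)$ of $(1-s^2)y''-2sy'+\alpha(\alpha+1)y=0$ bounded near $1$ with $L_\alpha(1)=1$; $z_p$ is its largest zero in $(-1,1)$; $h_c(s)=\big(\frac{1+s}{2}\big)^p-c^p\big(\frac{1-s}{2}\big)^p$. *)

theory Defs
  imports "HOL-Analysis.Analysis"
begin

definition hfun :: "real \<Rightarrow> real \<Rightarrow> real \<Rightarrow> real" where
  "hfun p c s = ((1 + s) / 2) powr p - c powr p * ((1 - s) / 2) powr p"

definition Dop :: "real \<Rightarrow> (real \<Rightarrow> real) \<Rightarrow> real \<Rightarrow> real" where
  "Dop p g s = (1 - s^2) * deriv (deriv g) s - 2 * s * deriv g s + p * g s"

definition Kop :: "real \<Rightarrow> (real \<Rightarrow> real) \<Rightarrow> real \<Rightarrow> real" where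
  "Kop p g s = p * (p - 1) * g s - 2 * (p - 1) * s * deriv g s - (1 - s^2) * deriv (deriv g) s"

text \<open>L is the solution on (-1,1) of (1-s^2)y''-2sy'+alpha(alpha+1)y=0 which is bounded
  near 1 and satisfies L(1)=1 (L(1) understood as the value of its continuous extension).\<close>
definition is_Legendre_L :: "real \<Rightarrow> (real \<Rightarrow> real) \<Rightarrow> bool" where
  "is_Legendre_L \<alpha> L \<longleftrightarrow>
     (\<forall>s\<in>{-1<..<1}. L differentiable (at s) \<and> deriv L differentiable (at s) \<and>
        (1 - s^2) * deriv (deriv L) s - 2 * s * deriv L s + \<alpha> * (\<alpha> + 1) * L s = 0)
     \<and> (\<exists>M. eventually (\<lambda>s. \<bar>L s\<bar> \<le> M) (at_left 1))
     \<and> (L \<longlongrightarrow> 1) (at_left 1) \<and> L 1 = 1"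

definition is_largest_zero :: "(real \<Rightarrow> real) \<Rightarrow> real \<Rightarrow> bool" where
  "is_largest_zero L z \<longleftrightarrow> z \<in> {-1<..<1} \<and> L z = 0 \<and> (\<forall>s\<in>{-1<..<1}. L s = 0 \<longrightarrow> s \<le> z)"

end

theory Submission
  imports Defs "HOL-Real_Asymp.Real_Asymp"
begin

text \<open>Write \<open>h = hfun p c\<close>. The barrier \<open>g\<close> is \<open>h\<close> left of the largest zero \<open>z\<close> of \<open>L\<close> and
  \<open>a L\<close> right of it, with \<open>c\<close> chosen so that \<open>h(z) = 0\<close> and \<open>a\<close> so that the derivatives match;
  hence \<open>g\<close> is \<open>C\<^sup>1\<close>. The proof has four ingredients, developed in this order:
  \<^item> a Hessian calculus for \<open>\<phi>(x,y) = (x+y)^p G((y-x)/(x+y))\<close>: the three combinations occurring in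
    the quadratic form are \<open>(x+y)^(p-2)\<close> times explicit combinations of \<open>K G\<close>, \<open>D G / (1\<plusminus>s)\<close> and
    \<open>\<plusminus>p G'\<close>, so \<open>D G \<le> 0\<close>, \<open>K G \<le> 0\<close>, \<open>G' \<ge> 0\<close> make the form nonpositive when \<open>|k| \<le> |h|\<close>;
  \<^item> identities for \<open>h\<close>: \<open>K h = 0\<close> and \<open>D h = p\<^sup>2 (1-s\<^sup>2)/4 \<cdot> hcore\<close> with \<open>hcore\<close> increasing;
  \<^item> the behaviour of \<open>L\<close> right of \<open>z\<close> (locale \<open>legendre_tail\<close>): \<open>L > 0\<close>, the flux
    \<open>(1-s\<^sup>2)L'\<close> is positive and tends to \<open>0\<close> at \<open>1\<close>, \<open>L'(1) = p/2\<close>, and \<open>pL - 2sL' \<le> 0\<close>;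
  \<^item> a Wronskian comparison of \<open>h\<close> and \<open>L\<close> (locale \<open>barrier\<close>) giving \<open>hcore(z) < 0\<close> and
    \<open>h \<le> aL\<close> on \<open>[z,1]\<close>, hence \<open>g \<ge> h\<close>, \<open>D g \<le> 0\<close> and \<open>K g \<le> 0\<close> off \<open>z\<close>.\<close>

text \<open>A function whose derivative is at least \<open>e/(1-s)\<close> near \<open>1\<close> grows like \<open>-e ln(1-s)\<close>
  and so has no finite limit at \<open>1\<close>.\<close>
lemma no_limit_under_logarithmic_growth:
  fixes f f' :: "real \<Rightarrow> real"
  assumes t0: "t0 < 1" and e: "e > 0"
    and deriv: "\<And>s. t0 < s \<Longrightarrow> s < 1 \<Longrightarrow> (f has_real_derivative f' s) (at s)"
    and growth: "\<And>s. t0 < s \<Longrightarrow> s < 1 \<Longrightarrow> f' s \<ge> e / (1 - s)"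
    and lim: "(f \<longlongrightarrow> l) (at_left 1)"
  shows False
proof -
  define s0 where "s0 = (t0 + 1) / 2"
  have s0: "t0 < s0" "s0 < 1" using t0 by (auto simp: s0_def)
  define F where "F s = f s + e * ln (1 - s)" for s
  have F_mono: "F s0 \<le> F s" if "s0 \<le> s" "s < 1" for s
  proof (rule DERIV_nonneg_imp_nondecreasing[OF that(1)])
    fix x assume x: "s0 \<le> x" "x \<le> s"
    have "(F has_real_derivative (f' x - e / (1 - x))) (at x)"
      unfolding F_def using x s0 that
      by (auto intro!: derivative_eq_intros deriv simp: field_simps)
    moreover have "f' x - e / (1 - x) \<ge> 0" using growth[of x] x s0 that by auto
    ultimately show "\<exists>y. (F has_real_derivative y) (at x) \<and> 0 \<le> y" by blast
  qed
  have "eventually (\<lambda>s. F s0 - e * ln (1 - s) \<le> f s) (at_left 1)"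
    using eventually_at_left_real[OF s0(2)]
  proof eventually_elim
    case (elim s) then show ?case using F_mono[of s] by (auto simp: F_def)
  qed
  moreover have "filterlim (\<lambda>s. F s0 - e * ln (1 - s)) at_top (at_left 1)"
    using e by real_asymp
  ultimately have "filterlim f at_top (at_left 1)"
    by (rule filterlim_at_top_mono[rotated])
  then show False
    using not_tendsto_and_filterlim_at_infinity[OF _ lim filterlim_at_top_imp_at_infinity]
      trivial_limit_at_left_real by blast
qed

lemma one_minus_square_pos: "-1 < s \<Longrightarrow> s < (1::real) \<Longrightarrow> 1 - s^2 > 0"
  by (simp add: abs_square_less_1 abs_less_iff)

lemma nonpos_if_nondecreasing_to_zero:
  fixes f f' :: "real \<Rightarrow> real"
  assumes sb: "s < b"
    and deriv: "\<And>t. s \<le> t \<Longrightarrow> t < b \<Longrightarrow> (f has_real_derivative f' t) (at t)"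
    and nonneg: "\<And>t. s \<le> t \<Longrightarrow> t < b \<Longrightarrow> f' t \<ge> 0"
    and lim: "(f \<longlongrightarrow> 0) (at_left b)"
  shows "f s \<le> 0"
proof -
  have "eventually (\<lambda>t. f s \<le> f t) (at_left b)"
    using eventually_at_left_real[OF sb]
  proof eventually_elim
    case (elim t)
    show ?case
    proof (rule DERIV_nonneg_imp_nondecreasing[of s t f])
      fix x assume "s \<le> x" "x \<le> t"
      then have "s \<le> x" "x < b" using elim by auto
      then show "\<exists>y. (f has_real_derivative y) (at x) \<and> 0 \<le> y" using deriv nonneg by blast
    qed (use elim in simp)
  qed
  from tendsto_le[OF trivial_limit_at_left_real lim tendsto_const this] show ?thesis .
qed

text \<open>Comparison used to turn bounds on \<open>(1-s\<^sup>2)L'\<close> into bounds \<open>L' \<ge> e/(1-s)\<close>.\<close>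
lemma divide_one_minus_square_ge:
  fixes e s :: real
  assumes "e \<ge> 0" "-1 < s" "s < 1"
  shows "e / 2 / (1 - s) \<le> e / (1 - s^2)"
proof -
  have "1 - s^2 \<le> 2 * (1 - s)" using zero_le_power2[of "1 - s"]
    by (simp add: power2_eq_square algebra_simps)
  then have "e / (2 * (1 - s)) \<le> e / (1 - s^2)"
    using assms one_minus_square_pos[of s] by (intro divide_left_mono) auto
  then show ?thesis by simp
qed

lemma powr_shift_forms:
  fixes U p :: real assumes "U > 0"
  shows "U powr (p - 1) = U powr (p - 2) * U" "U powr p = U powr (p - 2) * U * U"
    "U powr (p - 2 - 1) = U powr (p - 2) / U" "U powr (p - 1 - 1) = U powr (p - 2)"
proof -
  have step: "U powr (q + 1) = U powr q * U" for q using assms by (simp add: powr_add)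
  show a: "U powr (p - 1) = U powr (p - 2) * U" using step[of "p - 2"] by simp
  show "U powr p = U powr (p - 2) * U * U" using step[of "p - 1"] a by simp
  have "U powr (p - 2) = U powr (p - 2 - 1) * U" using step[of "p - 2 - 1"] by simp
  then show "U powr (p - 2 - 1) = U powr (p - 2) / U" using assms by simp
  show "U powr (p - 1 - 1) = U powr (p - 2)" by (simp add: diff_diff_eq)
qed

text \<open>The operators \<open>D\<close> and \<open>K\<close> evaluated on given values \<open>g0 = g(s)\<close>, \<open>g1 = g'(s)\<close>,
  \<open>g2 = g''(s)\<close>; this decouples the algebra from the differentiation.\<close>
definition Dcoef :: "real \<Rightarrow> real \<Rightarrow> real \<Rightarrow> real \<Rightarrow> real \<Rightarrow> real" where
  "Dcoef p s g0 g1 g2 = (1 - s^2) * g2 - 2 * s * g1 + p * g0"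

definition Kcoef :: "real \<Rightarrow> real \<Rightarrow> real \<Rightarrow> real \<Rightarrow> real \<Rightarrow> real" where
  "Kcoef p s g0 g1 g2 = p * (p - 1) * g0 - 2 * (p - 1) * s * g1 - (1 - s^2) * g2"

lemma Dop_eq_Dcoef: "Dop p g s = Dcoef p s (g s) (deriv g s) (deriv (deriv g) s)"
  by (simp add: Dop_def Dcoef_def)

lemma Kop_eq_Kcoef: "Kop p g s = Kcoef p s (g s) (deriv g s) (deriv (deriv g) s)"
  by (simp add: Kop_def Kcoef_def)

definition ratio :: "real \<Rightarrow> real \<Rightarrow> real" where
  "ratio x y = (y - x) / (x + y)"

lemma ratio_has_deriv_x:
  "x + y > 0 \<Longrightarrow> ((\<lambda>x'. ratio x' y) has_real_derivative (- 2 * y / (x + y)^2)) (at x)"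
  unfolding ratio_def by (auto intro!: derivative_eq_intros simp: power2_eq_square divide_simps)

lemma ratio_has_deriv_y:
  "x + y > 0 \<Longrightarrow> ((\<lambda>y'. ratio x y') has_real_derivative (2 * x / (x + y)^2)) (at y)"
  unfolding ratio_def by (auto intro!: derivative_eq_intros simp: power2_eq_square divide_simps)

definition hom_dx :: "real \<Rightarrow> (real \<Rightarrow> real) \<Rightarrow> (real \<Rightarrow> real) \<Rightarrow> real \<Rightarrow> real \<Rightarrow> real" where
  "hom_dx p G G' x y =
     p * (x + y) powr (p - 1) * G (ratio x y) - 2 * y * (x + y) powr (p - 2) * G' (ratio x y)"

definition hom_dy :: "real \<Rightarrow> (real \<Rightarrow> real) \<Rightarrow> (real \<Rightarrow> real) \<Rightarrow> real \<Rightarrow> real \<Rightarrow> real" where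
  "hom_dy p G G' x y =
     p * (x + y) powr (p - 1) * G (ratio x y) + 2 * x * (x + y) powr (p - 2) * G' (ratio x y)"

lemma sum_powr_has_deriv_x:
  "x + y > 0 \<Longrightarrow> ((\<lambda>x'. (x' + y) powr q) has_real_derivative q * (x + y) powr (q - 1)) (at x)"
  by (auto intro!: derivative_eq_intros)

lemma sum_powr_has_deriv_y:
  "x + y > 0 \<Longrightarrow> ((\<lambda>y'. (x + y') powr q) has_real_derivative q * (x + y) powr (q - 1)) (at y)"
  by (auto intro!: derivative_eq_intros)

lemma hom_has_deriv_x:
  assumes U: "x + y > 0" and dG: "(G has_real_derivative G' (ratio x y)) (at (ratio x y))"
  shows "((\<lambda>x'. (x' + y) powr p * G (ratio x' y)) has_real_derivative hom_dx p G G' x y) (at x)"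
proof -
  have "((\<lambda>x'. (x' + y) powr p * G (ratio x' y)) has_real_derivative
      p * (x + y) powr (p - 1) * G (ratio x y) + (x + y) powr p * (G' (ratio x y) * (- 2 * y / (x + y)^2))) (at x)"
    using U by (auto intro!: derivative_eq_intros DERIV_chain2[OF dG ratio_has_deriv_x[OF U]])
  then show ?thesis
    using U by (simp add: hom_dx_def powr_diff power2_eq_square field_simps)
qed

lemma hom_has_deriv_y:
  assumes U: "x + y > 0" and dG: "(G has_real_derivative G' (ratio x y)) (at (ratio x y))"
  shows "((\<lambda>y'. (x + y') powr p * G (ratio x y')) has_real_derivative hom_dy p G G' x y) (at y)"
proof -
  have "((\<lambda>y'. (x + y') powr p * G (ratio x y')) has_real_derivative
      p * (x + y) powr (p - 1) * G (ratio x y) + (x + y) powr p * (G' (ratio x y) * (2 * x / (x + y)^2))) (at y)"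
    using U by (auto intro!: derivative_eq_intros DERIV_chain2[OF dG ratio_has_deriv_y[OF U]])
  then show ?thesis
    using U by (simp add: hom_dy_def powr_diff power2_eq_square field_simps)
qed

lemma hom_dx_has_deriv_x:
  fixes G G' G'' :: "real \<Rightarrow> real" and p x y :: real
  assumes U: "x + y > 0" and dG: "(G has_real_derivative G' (ratio x y)) (at (ratio x y))"
    and dG': "(G' has_real_derivative G'' (ratio x y)) (at (ratio x y))"
  shows "((\<lambda>x'. hom_dx p G G' x' y) has_real_derivative
     (x + y) powr (p - 2) * (p * (p - 1) * G (ratio x y) - 2 * (p - 1) * (1 + ratio x y) * G' (ratio x y)
        + (1 + ratio x y)^2 * G'' (ratio x y))) (at x)"
proof -
  note d1 = DERIV_chain2[OF dG ratio_has_deriv_x[OF U]]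
  note d1' = DERIV_chain2[OF dG' ratio_has_deriv_x[OF U]]
  define g where "g = G (ratio x y)"
  define g1 where "g1 = G' (ratio x y)"
  define g2 where "g2 = G'' (ratio x y)"
  define P where "P = (x + y) powr (p - 2)"
  define s where "s = ratio x y"
  have s_eq: "s = (y - x) / (x + y)" by (simp add: s_def ratio_def)
  define V where "V = x + y"
  have V: "V > 0" using U by (simp add: V_def)
  show ?thesis unfolding hom_dx_def
    apply (rule DERIV_cong[OF DERIV_diff[OF DERIV_mult[OF DERIV_cmult[OF sum_powr_has_deriv_x[OF U]] d1]
          DERIV_mult[OF DERIV_cmult[OF sum_powr_has_deriv_x[OF U]] d1']]])
    unfolding powr_shift_forms[OF U, of p]
    unfolding g_def[symmetric] g1_def[symmetric] g2_def[symmetric] P_def[symmetric]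
    unfolding s_def[symmetric] s_eq V_def[symmetric]
    using V by (simp add: field_simps power2_eq_square) (simp add: V_def algebra_simps)
qed

lemma hom_dx_has_deriv_y:
  fixes G G' G'' :: "real \<Rightarrow> real" and p x y :: real
  assumes U: "x + y > 0" and dG: "(G has_real_derivative G' (ratio x y)) (at (ratio x y))"
    and dG': "(G' has_real_derivative G'' (ratio x y)) (at (ratio x y))"
  shows "((\<lambda>y'. hom_dx p G G' x y') has_real_derivative
     (x + y) powr (p - 2) * (p * (p - 1) * G (ratio x y) - 2 * (p - 1) * ratio x y * G' (ratio x y)
        - (1 - (ratio x y)^2) * G'' (ratio x y))) (at y)"
proof -
  note d1 = DERIV_chain2[OF dG ratio_has_deriv_y[OF U]]
  note d1' = DERIV_chain2[OF dG' ratio_has_deriv_y[OF U]]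
  define g where "g = G (ratio x y)"
  define g1 where "g1 = G' (ratio x y)"
  define g2 where "g2 = G'' (ratio x y)"
  define P where "P = (x + y) powr (p - 2)"
  define s where "s = ratio x y"
  have s_eq: "s = (y - x) / (x + y)" by (simp add: s_def ratio_def)
  define V where "V = x + y"
  have V: "V > 0" using U by (simp add: V_def)
  show ?thesis unfolding hom_dx_def
    apply (rule DERIV_cong[OF DERIV_diff[OF DERIV_mult[OF DERIV_cmult[OF sum_powr_has_deriv_y[OF U]] d1]
          DERIV_mult[OF DERIV_mult[OF DERIV_cmult[OF DERIV_ident] sum_powr_has_deriv_y[OF U]] d1']]])
    unfolding powr_shift_forms[OF U, of p]
    unfolding g_def[symmetric] g1_def[symmetric] g2_def[symmetric] P_def[symmetric]
    unfolding s_def[symmetric] s_eq V_def[symmetric]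
    using V by (simp add: field_simps power2_eq_square) (simp add: V_def algebra_simps)
qed

lemma hom_dy_has_deriv_y:
  fixes G G' G'' :: "real \<Rightarrow> real" and p x y :: real
  assumes U: "x + y > 0" and dG: "(G has_real_derivative G' (ratio x y)) (at (ratio x y))"
    and dG': "(G' has_real_derivative G'' (ratio x y)) (at (ratio x y))"
  shows "((\<lambda>y'. hom_dy p G G' x y') has_real_derivative
     (x + y) powr (p - 2) * (p * (p - 1) * G (ratio x y) + 2 * (p - 1) * (1 - ratio x y) * G' (ratio x y)
        + (1 - ratio x y)^2 * G'' (ratio x y))) (at y)"
proof -
  note d1 = DERIV_chain2[OF dG ratio_has_deriv_y[OF U]]
  note d1' = DERIV_chain2[OF dG' ratio_has_deriv_y[OF U]]
  define g where "g = G (ratio x y)"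
  define g1 where "g1 = G' (ratio x y)"
  define g2 where "g2 = G'' (ratio x y)"
  define P where "P = (x + y) powr (p - 2)"
  define s where "s = ratio x y"
  have s_eq: "s = (y - x) / (x + y)" by (simp add: s_def ratio_def)
  define V where "V = x + y"
  have V: "V > 0" using U by (simp add: V_def)
  show ?thesis unfolding hom_dy_def
    apply (rule DERIV_cong[OF DERIV_add[OF DERIV_mult[OF DERIV_cmult[OF sum_powr_has_deriv_y[OF U]] d1]
          DERIV_mult[OF DERIV_cmult[OF sum_powr_has_deriv_y[OF U]] d1']]])
    unfolding powr_shift_forms[OF U, of p]
    unfolding g_def[symmetric] g1_def[symmetric] g2_def[symmetric] P_def[symmetric]
    unfolding s_def[symmetric] s_eq V_def[symmetric]
    using V by (simp add: field_simps power2_eq_square) (simp add: V_def algebra_simps)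
qed

lemma ratio_region_eventually:
  assumes I: "open I" and xy: "x > 0" "y > 0" "ratio x y \<in> I"
  shows "eventually (\<lambda>x'. x' > 0 \<and> ratio x' y \<in> I) (nhds x)"
    and "eventually (\<lambda>y'. y' > 0 \<and> ratio x y' \<in> I) (nhds y)"
proof -
  have "isCont (\<lambda>x'. ratio x' y) x" "isCont (\<lambda>y'. ratio x y') y"
    using xy by (auto simp: ratio_def intro!: continuous_intros)
  then have "eventually (\<lambda>x'. ratio x' y \<in> I) (nhds x)" "eventually (\<lambda>y'. ratio x y' \<in> I) (nhds y)"
    using I xy(3) by (auto simp: isCont_def eventually_nhds_conv_at dest: topological_tendstoD)
  moreover have "eventually (\<lambda>x'. x' > 0) (nhds x)" "eventually (\<lambda>y'. y' > 0) (nhds y)"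
    using xy by (auto intro!: eventually_nhds_in_open[of "{0<..}", simplified])
  ultimately show "eventually (\<lambda>x'. x' > 0 \<and> ratio x' y \<in> I) (nhds x)"
    and "eventually (\<lambda>y'. y' > 0 \<and> ratio x y' \<in> I) (nhds y)"
    by (auto elim: eventually_elim2)
qed

lemma hessian_algebra_x:
  fixes V s P p g0 g1 g2 :: real
  assumes "V > 0" "1 - s \<noteq> 0"
  shows "P * (p * V * g0 - 2 * (V * (1 + s) / 2) * g1) / (V * (1 - s) / 2)
      + P * (p * (p - 1) * g0 - 2 * (p - 1) * (1 + s) * g1 + (1 + s)^2 * g2)
      = P * (Kcoef p s g0 g1 g2 + 2 * Dcoef p s g0 g1 g2 / (1 - s) - 2 * p * g1)"
  using assms by (simp add: Kcoef_def Dcoef_def field_simps power2_eq_square)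

lemma hessian_algebra_y:
  fixes V s P p g0 g1 g2 :: real
  assumes "V > 0" "1 + s > 0"
  shows "P * (p * (p - 1) * g0 + 2 * (p - 1) * (1 - s) * g1 + (1 - s)^2 * g2)
      + P * (p * V * g0 + 2 * (V * (1 - s) / 2) * g1) / (V * (1 + s) / 2)
      = P * (Kcoef p s g0 g1 g2 + 2 * Dcoef p s g0 g1 g2 / (1 + s) + 2 * p * g1)"
proof -
  have "V * 2 + V * (s * 2) \<noteq> 0" using assms mult_pos_pos[of V "1 + s"] by (simp add: algebra_simps)
  then show ?thesis using assms by (simp add: Kcoef_def Dcoef_def field_simps power2_eq_square)
qed

lemma local_first_partials:
  fixes \<phi> :: "real \<Rightarrow> real \<Rightarrow> real" and G G' :: "real \<Rightarrow> real"
  assumes I: "open I"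
    and phi_eq: "\<And>x y. x > 0 \<Longrightarrow> y > 0 \<Longrightarrow> ratio x y \<in> I \<Longrightarrow> \<phi> x y = (x + y) powr p * G (ratio x y)"
    and dG: "\<And>s. s \<in> I \<Longrightarrow> (G has_real_derivative G' s) (at s)"
    and xy: "x > 0" "y > 0" "ratio x y \<in> I"
  shows "deriv (\<lambda>t. \<phi> t y) x = hom_dx p G G' x y" and "deriv (\<lambda>t. \<phi> x t) y = hom_dy p G G' x y"
proof -
  have U: "x + y > 0" using xy by simp
  have dG_s: "(G has_real_derivative G' (ratio x y)) (at (ratio x y))" using dG xy(3) .
  have ev_x: "eventually (\<lambda>t. (t + y) powr p * G (ratio t y) = \<phi> t y) (nhds x)"
    using ratio_region_eventually(1)[OF I xy] by eventually_elim (simp add: phi_eq xy)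
  have ev_y: "eventually (\<lambda>t. (x + t) powr p * G (ratio x t) = \<phi> x t) (nhds y)"
    using ratio_region_eventually(2)[OF I xy] by eventually_elim (simp add: phi_eq xy)
  show "deriv (\<lambda>t. \<phi> t y) x = hom_dx p G G' x y"
    by (rule DERIV_imp_deriv, rule DERIV_cong_ev[OF refl ev_x refl, THEN iffD1])
      (rule hom_has_deriv_x[where G' = G', OF U dG_s])
  show "deriv (\<lambda>t. \<phi> x t) y = hom_dy p G G' x y"
    by (rule DERIV_imp_deriv, rule DERIV_cong_ev[OF refl ev_y refl, THEN iffD1])
      (rule hom_has_deriv_y[where G' = G', OF U dG_s])
qed

lemma local_second_partials:
  fixes \<phi> :: "real \<Rightarrow> real \<Rightarrow> real" and G G' G'' :: "real \<Rightarrow> real"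
  assumes I: "open I"
    and phi_eq: "\<And>x y. x > 0 \<Longrightarrow> y > 0 \<Longrightarrow> ratio x y \<in> I \<Longrightarrow> \<phi> x y = (x + y) powr p * G (ratio x y)"
    and dG: "\<And>s. s \<in> I \<Longrightarrow> (G has_real_derivative G' s) (at s)"
    and dG': "\<And>s. s \<in> I \<Longrightarrow> (G' has_real_derivative G'' s) (at s)"
    and xy: "x > 0" "y > 0" "ratio x y \<in> I"
  defines "s \<equiv> ratio x y" and "P \<equiv> (x + y) powr (p - 2)"
  shows "deriv (\<lambda>t. deriv (\<lambda>t'. \<phi> t' y) t) x
           = P * (p * (p - 1) * G s - 2 * (p - 1) * (1 + s) * G' s + (1 + s)^2 * G'' s)"
    and "deriv (\<lambda>t. deriv (\<lambda>t'. \<phi> t' t) x) y = P * Kcoef p s (G s) (G' s) (G'' s)"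
    and "deriv (\<lambda>t. deriv (\<lambda>t'. \<phi> x t') t) y
           = P * (p * (p - 1) * G s + 2 * (p - 1) * (1 - s) * G' s + (1 - s)^2 * G'' s)"
proof -
  note first = local_first_partials[OF I phi_eq dG]
  have U: "x + y > 0" using xy by simp
  have dG_s: "(G has_real_derivative G' s) (at s)" and dG'_s: "(G' has_real_derivative G'' s) (at s)"
    using dG dG' xy(3) by (auto simp: s_def)
  have "eventually (\<lambda>t. hom_dx p G G' t y = deriv (\<lambda>t'. \<phi> t' y) t) (nhds x)"
    using ratio_region_eventually(1)[OF I xy] by eventually_elim (simp add: first xy)
  then have "deriv (\<lambda>t. deriv (\<lambda>t'. \<phi> t' y) t) x = deriv (\<lambda>t. hom_dx p G G' t y) x"
    by (intro deriv_cong_ev[symmetric]) auto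
  then show "deriv (\<lambda>t. deriv (\<lambda>t'. \<phi> t' y) t) x
      = P * (p * (p - 1) * G s - 2 * (p - 1) * (1 + s) * G' s + (1 + s)^2 * G'' s)"
    using DERIV_imp_deriv[OF hom_dx_has_deriv_x[where G' = G' and G'' = G'', OF U dG_s[unfolded s_def] dG'_s[unfolded s_def]]]
    by (simp add: s_def P_def)
  have "eventually (\<lambda>t. hom_dx p G G' x t = deriv (\<lambda>t'. \<phi> t' t) x) (nhds y)"
    using ratio_region_eventually(2)[OF I xy] by eventually_elim (simp add: first xy)
  then have "deriv (\<lambda>t. deriv (\<lambda>t'. \<phi> t' t) x) y = deriv (\<lambda>t. hom_dx p G G' x t) y"
    by (intro deriv_cong_ev[symmetric]) auto
  then show "deriv (\<lambda>t. deriv (\<lambda>t'. \<phi> t' t) x) y = P * Kcoef p s (G s) (G' s) (G'' s)"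
    using DERIV_imp_deriv[OF hom_dx_has_deriv_y[where G' = G' and G'' = G'', OF U dG_s[unfolded s_def] dG'_s[unfolded s_def]]]
    by (simp add: s_def P_def Kcoef_def)
  have "eventually (\<lambda>t. hom_dy p G G' x t = deriv (\<lambda>t'. \<phi> x t') t) (nhds y)"
    using ratio_region_eventually(2)[OF I xy] by eventually_elim (simp add: first xy)
  then have "deriv (\<lambda>t. deriv (\<lambda>t'. \<phi> x t') t) y = deriv (\<lambda>t. hom_dy p G G' x t) y"
    by (intro deriv_cong_ev[symmetric]) auto
  then show "deriv (\<lambda>t. deriv (\<lambda>t'. \<phi> x t') t) y
      = P * (p * (p - 1) * G s + 2 * (p - 1) * (1 - s) * G' s + (1 - s)^2 * G'' s)"
    using DERIV_imp_deriv[OF hom_dy_has_deriv_y[where G' = G' and G'' = G'', OF U dG_s[unfolded s_def] dG'_s[unfolded s_def]]]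
    by (simp add: s_def P_def)
qed

lemma hessian_combinations:
  fixes \<phi> :: "real \<Rightarrow> real \<Rightarrow> real" and G G' G'' :: "real \<Rightarrow> real"
  assumes I: "open I" "I \<subseteq> {-1<..<1}"
    and phi_eq: "\<And>x y. x > 0 \<Longrightarrow> y > 0 \<Longrightarrow> ratio x y \<in> I \<Longrightarrow> \<phi> x y = (x + y) powr p * G (ratio x y)"
    and dG: "\<And>s. s \<in> I \<Longrightarrow> (G has_real_derivative G' s) (at s)"
    and dG': "\<And>s. s \<in> I \<Longrightarrow> (G' has_real_derivative G'' s) (at s)"
    and xy: "x > 0" "y > 0" "ratio x y \<in> I"
  defines "s \<equiv> ratio x y" and "P \<equiv> (x + y) powr (p - 2)"
  shows "deriv (\<lambda>t. \<phi> t y) x / x + deriv (\<lambda>t. deriv (\<lambda>t'. \<phi> t' y) t) x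
           = P * (Kcoef p s (G s) (G' s) (G'' s) + 2 * Dcoef p s (G s) (G' s) (G'' s) / (1 - s)
                  - 2 * p * G' s)"
    and "deriv (\<lambda>t. deriv (\<lambda>t'. \<phi> t' t) x) y = P * Kcoef p s (G s) (G' s) (G'' s)"
    and "deriv (\<lambda>t. deriv (\<lambda>t'. \<phi> x t') t) y + deriv (\<lambda>t'. \<phi> x t') y / y
           = P * (Kcoef p s (G s) (G' s) (G'' s) + 2 * Dcoef p s (G s) (G' s) (G'' s) / (1 + s)
                  + 2 * p * G' s)"
proof -
  note first = local_first_partials[OF I(1) phi_eq dG xy]
  note second = local_second_partials[OF I(1) phi_eq dG dG' xy]
  have xx: "deriv (\<lambda>t. deriv (\<lambda>t'. \<phi> t' y) t) x
      = P * (p * (p - 1) * G s - 2 * (p - 1) * (1 + s) * G' s + (1 + s)^2 * G'' s)"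
    unfolding s_def P_def by (rule second(1))
  show "deriv (\<lambda>t. deriv (\<lambda>t'. \<phi> t' t) x) y = P * Kcoef p s (G s) (G' s) (G'' s)"
    unfolding s_def P_def by (rule second(2))
  have yy: "deriv (\<lambda>t. deriv (\<lambda>t'. \<phi> x t') t) y
      = P * (p * (p - 1) * G s + 2 * (p - 1) * (1 - s) * G' s + (1 - s)^2 * G'' s)"
    unfolding s_def P_def by (rule second(3))
  define V where "V = x + y"
  have V: "V > 0" using xy by (simp add: V_def)
  have s_bounds: "1 - s > 0" "1 + s > 0" using I(2) xy(3) by (auto simp: s_def)
  have x_eq: "x = V * (1 - s) / 2" and y_eq: "y = V * (1 + s) / 2"
    using V by (simp_all add: s_def ratio_def V_def field_simps)
  have dx: "deriv (\<lambda>t. \<phi> t y) x = P * (p * V * G s - 2 * y * G' s)"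
    using first(1) powr_shift_forms[OF V[unfolded V_def], of p]
    by (simp add: hom_dx_def P_def V_def s_def algebra_simps)
  have dy: "deriv (\<lambda>t. \<phi> x t) y = P * (p * V * G s + 2 * x * G' s)"
    using first(2) powr_shift_forms[OF V[unfolded V_def], of p]
    by (simp add: hom_dy_def P_def V_def s_def algebra_simps)
  show "deriv (\<lambda>t. \<phi> t y) x / x + deriv (\<lambda>t. deriv (\<lambda>t'. \<phi> t' y) t) x
      = P * (Kcoef p s (G s) (G' s) (G'' s) + 2 * Dcoef p s (G s) (G' s) (G'' s) / (1 - s)
             - 2 * p * G' s)"
    unfolding dx xx unfolding x_eq y_eq using V s_bounds by (intro hessian_algebra_x) auto
  show "deriv (\<lambda>t. deriv (\<lambda>t'. \<phi> x t') t) y + deriv (\<lambda>t'. \<phi> x t') y / y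
      = P * (Kcoef p s (G s) (G' s) (G'' s) + 2 * Dcoef p s (G s) (G' s) (G'' s) / (1 + s)
             + 2 * p * G' s)"
    unfolding dy yy unfolding x_eq y_eq using V s_bounds by (intro hessian_algebra_y) auto
qed

text \<open>Sign of the quadratic form: it equals
  \<open>P (K |h+k|\<^sup>2 + 2D|h|\<^sup>2/(1-s) + 2D|k|\<^sup>2/(1+s) + 2pG'(|k|\<^sup>2 - |h|\<^sup>2))\<close>.\<close>
lemma quadratic_form_nonpos:
  fixes h k :: "'a::real_inner"
  assumes P: "P \<ge> 0" and s: "-1 < s" "s < 1" and p: "p \<ge> 0"
    and K: "K \<le> 0" and D: "D \<le> 0" and g1: "g1 \<ge> 0" and hk: "norm k \<le> norm h"
  shows "P * (K + 2 * D / (1 - s) - 2 * p * g1) * (norm h)^2 + 2 * (P * K) * (h \<bullet> k)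
           + P * (K + 2 * D / (1 + s) + 2 * p * g1) * (norm k)^2 \<le> 0"
proof -
  have sum_sq: "(norm h)^2 + 2 * (h \<bullet> k) + (norm k)^2 = (norm (h + k))^2"
    by (simp add: power2_norm_eq_inner inner_add inner_commute algebra_simps)
  have "P * (K + 2 * D / (1 - s) - 2 * p * g1) * (norm h)^2 + 2 * (P * K) * (h \<bullet> k)
           + P * (K + 2 * D / (1 + s) + 2 * p * g1) * (norm k)^2
        = P * (K * (norm (h + k))^2 + 2 * D / (1 - s) * (norm h)^2 + 2 * D / (1 + s) * (norm k)^2
               + 2 * p * g1 * ((norm k)^2 - (norm h)^2))"
    by (simp add: sum_sq[symmetric] algebra_simps)
  also have "\<dots> \<le> 0"
  proof -
    have "K * (norm (h + k))^2 \<le> 0" using K by (simp add: mult_nonpos_nonneg)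
    moreover have "2 * D / (1 - s) * (norm h)^2 \<le> 0" "2 * D / (1 + s) * (norm k)^2 \<le> 0"
      using D s by (simp_all add: mult_nonpos_nonneg divide_nonpos_pos)
    moreover have "(norm k)^2 \<le> (norm h)^2" using hk by (simp add: power_mono)
    then have "2 * p * g1 * ((norm k)^2 - (norm h)^2) \<le> 0" using p g1 by (simp add: mult_nonneg_nonpos)
    ultimately have "K * (norm (h + k))^2 + 2 * D / (1 - s) * (norm h)^2 + 2 * D / (1 + s) * (norm k)^2
        + 2 * p * g1 * ((norm k)^2 - (norm h)^2) \<le> 0" by linarith
    then show ?thesis using P by (simp add: mult_nonneg_nonpos)
  qed
  finally show ?thesis .
qed

definition hessian_form :: "(real \<Rightarrow> real \<Rightarrow> real) \<Rightarrow> real \<Rightarrow> real \<Rightarrow> real^2 \<Rightarrow> real^2 \<Rightarrow> real" where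
  "hessian_form \<phi> x y h k =
     (let \<phi>x = (\<lambda>x' y'. deriv (\<lambda>t. \<phi> t y') x');
          \<phi>y = (\<lambda>x' y'. deriv (\<lambda>t. \<phi> x' t) y');
          \<phi>xx = deriv (\<lambda>t. \<phi>x t y) x;
          \<phi>yy = deriv (\<lambda>t. \<phi>y x t) y;
          \<phi>xy = deriv (\<lambda>t. \<phi>x x t) y
      in (\<phi>x x y / x + \<phi>xx) * (norm h)^2 + 2 * \<phi>xy * (h \<bullet> k)
         + (\<phi>yy + \<phi>y x y / y) * (norm k)^2)"

lemma hessian_form_nonpos:
  fixes \<phi> :: "real \<Rightarrow> real \<Rightarrow> real" and G G' G'' :: "real \<Rightarrow> real" and h k :: "real^2"
  assumes I: "open I" "I \<subseteq> {-1<..<1}" and p: "p \<ge> 0"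
    and phi_eq: "\<And>x y. x > 0 \<Longrightarrow> y > 0 \<Longrightarrow> ratio x y \<in> I \<Longrightarrow> \<phi> x y = (x + y) powr p * G (ratio x y)"
    and dG: "\<And>s. s \<in> I \<Longrightarrow> (G has_real_derivative G' s) (at s)"
    and dG': "\<And>s. s \<in> I \<Longrightarrow> (G' has_real_derivative G'' s) (at s)"
    and G'_nonneg: "\<And>s. s \<in> I \<Longrightarrow> G' s \<ge> 0"
    and D_nonpos: "\<And>s. s \<in> I \<Longrightarrow> Dcoef p s (G s) (G' s) (G'' s) \<le> 0"
    and K_nonpos: "\<And>s. s \<in> I \<Longrightarrow> Kcoef p s (G s) (G' s) (G'' s) \<le> 0"
    and xy: "x > 0" "y > 0" "ratio x y \<in> I" and hk: "norm k \<le> norm h"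
  shows "hessian_form \<phi> x y h k \<le> 0"
proof -
  have "ratio x y \<in> {-1<..<1}" using I(2) xy(3) by blast
  then show ?thesis
    unfolding hessian_form_def Let_def
    using quadratic_form_nonpos[OF _ _ _ p K_nonpos[OF xy(3)] D_nonpos[OF xy(3)] G'_nonneg[OF xy(3)] hk,
        of "(x + y) powr (p - 2)"]
    by (simp add: hessian_combinations[OF I phi_eq dG dG' xy, simplified] mult.assoc)
qed

text \<open>Derivatives of \<open>h = hfun p c\<close>, and the factor \<open>hcore\<close> governing the sign of \<open>D h\<close>.\<close>
definition hder :: "real \<Rightarrow> real \<Rightarrow> real \<Rightarrow> real" where
  "hder p c s = p / 2 * ((1 + s) / 2) powr (p - 1) + c powr p * (p / 2) * ((1 - s) / 2) powr (p - 1)"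

definition hder2 :: "real \<Rightarrow> real \<Rightarrow> real \<Rightarrow> real" where
  "hder2 p c s = p * (p - 1) / 4 * ((1 + s) / 2) powr (p - 2)
                 - c powr p * (p * (p - 1) / 4) * ((1 - s) / 2) powr (p - 2)"

definition hcore :: "real \<Rightarrow> real \<Rightarrow> real \<Rightarrow> real" where
  "hcore p c s = ((1 + s) / 2) powr (p - 2) - c powr p * ((1 - s) / 2) powr (p - 2)"

lemma hfun_has_deriv:
  "-1 < s \<Longrightarrow> s < 1 \<Longrightarrow> (hfun p c has_real_derivative hder p c s) (at s)"
  unfolding hfun_def[abs_def] hder_def by (auto intro!: derivative_eq_intros simp: field_simps)

lemma hder_has_deriv:
  "-1 < s \<Longrightarrow> s < 1 \<Longrightarrow> (hder p c has_real_derivative hder2 p c s) (at s)"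
  unfolding hder_def[abs_def] hder2_def by (auto intro!: derivative_eq_intros simp: field_simps)

lemma hder_pos: "p > 0 \<Longrightarrow> -1 < s \<Longrightarrow> s < 1 \<Longrightarrow> hder p c s > 0"
  unfolding hder_def by (intro add_pos_nonneg) auto

text \<open>Since \<open>h\<close> is a combination of the homogeneous powers \<open>((1\<plusminus>s)/2)^p\<close>, \<open>K h = 0\<close>, while
  \<open>D h = p\<^sup>2 ((1+s)/2)((1-s)/2) hcore\<close>.\<close>
lemma hfun_coefficients:
  assumes s: "-1 < s" "s < 1"
  shows "Dcoef p s (hfun p c s) (hder p c s) (hder2 p c s) = p^2 * ((1 + s) / 2) * ((1 - s) / 2) * hcore p c s"
    and "Kcoef p s (hfun p c s) (hder p c s) (hder2 p c s) = 0"
proof -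
  define U where "U = (1 + s) / 2"
  define V where "V = (1 - s) / 2"
  have U: "U > 0" and V: "V > 0" using s by (auto simp: U_def V_def)
  have s_UV: "s = U - V" "1 - s^2 = 4 * U * V" by (auto simp: U_def V_def power2_eq_square field_simps)
  have h: "hfun p c s = U powr (p - 2) * U * U - c powr p * (V powr (p - 2) * V * V)"
    unfolding hfun_def U_def[symmetric] V_def[symmetric]
    using powr_shift_forms(2)[OF U, of p] powr_shift_forms(2)[OF V, of p] by simp
  have h': "hder p c s = p / 2 * (U powr (p - 2) * U) + c powr p * (p / 2) * (V powr (p - 2) * V)"
    unfolding hder_def U_def[symmetric] V_def[symmetric]
    using powr_shift_forms(1)[OF U, of p] powr_shift_forms(1)[OF V, of p] by simp
  have h'': "hder2 p c s = p * (p - 1) / 4 * U powr (p - 2) - c powr p * (p * (p - 1) / 4) * V powr (p - 2)"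
    unfolding hder2_def U_def[symmetric] V_def[symmetric] by simp
  have core: "hcore p c s = U powr (p - 2) - c powr p * V powr (p - 2)"
    unfolding hcore_def U_def[symmetric] V_def[symmetric] by simp
  show "Dcoef p s (hfun p c s) (hder p c s) (hder2 p c s) = p^2 * ((1 + s) / 2) * ((1 - s) / 2) * hcore p c s"
    unfolding Dcoef_def h h' h'' core U_def[symmetric] V_def[symmetric] s_UV(2) unfolding s_UV(1)
    by (simp add: power2_eq_square field_simps)
  show "Kcoef p s (hfun p c s) (hder p c s) (hder2 p c s) = 0"
    unfolding Kcoef_def h h' h'' s_UV(2) unfolding s_UV(1)
    by (simp add: power2_eq_square field_simps)
qed

text \<open>For \<open>p > 2\<close>, \<open>hcore\<close> is strictly increasing; so \<open>D h\<close> changes sign at most once.\<close>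
lemma hcore_strict_mono:
  assumes "p > 2" "-1 < s" "s < t" "t < 1"
  shows "hcore p c s < hcore p c t"
proof -
  have "((1 + s) / 2) powr (p - 2) < ((1 + t) / 2) powr (p - 2)"
    using assms by (intro powr_less_mono2) auto
  moreover have "((1 - t) / 2) powr (p - 2) \<le> ((1 - s) / 2) powr (p - 2)"
    using assms by (intro powr_mono2) auto
  then have "c powr p * ((1 - t) / 2) powr (p - 2) \<le> c powr p * ((1 - s) / 2) powr (p - 2)"
    by (simp add: mult_left_mono)
  ultimately show ?thesis unfolding hcore_def by linarith
qed

lemma hfun_zero:
  assumes "-1 < z" "z < 1"
  shows "hfun p ((1 + z) / (1 - z)) z = 0"
proof -
  have "(1 + z) / (1 - z) * ((1 - z) / 2) = (1 + z) / 2" using assms by (simp add: field_simps)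
  then have "((1 + z) / (1 - z)) powr p * ((1 - z) / 2) powr p = ((1 + z) / 2) powr p"
    using assms by (metis powr_mult divide_nonneg_pos less_eq_real_def diff_gt_0_iff_gt
        zero_less_numeral add.commute diff_minus_eq_add minus_less_iff)
  then show ?thesis by (simp add: hfun_def)
qed

lemma hfun_continuous_on: "p > 0 \<Longrightarrow> continuous_on {-1..1} (hfun p c)"
  unfolding hfun_def by (intro continuous_intros continuous_on_powr') auto

lemma hder_continuous_on: "p > 1 \<Longrightarrow> continuous_on {-1..1} (hder p c)"
  unfolding hder_def by (intro continuous_intros continuous_on_powr') auto

lemma hfun_tendsto_1: "p > 0 \<Longrightarrow> (hfun p c \<longlongrightarrow> 1) (at_left 1)"
  using continuous_on_Icc_at_leftD[OF hfun_continuous_on[of p c]] by (simp add: hfun_def)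

lemma hfun_has_deriv_minus_1:
  assumes p: "p > 1"
  shows "(hfun p c has_real_derivative hder p c (-1)) (at (-1) within {-1..1})"
proof -
  have ev: "eventually (\<lambda>x. x \<in> {-1<..<1}) (at_right (-1::real))"
    by (rule eventually_at_right_real) simp
  have "((\<lambda>x. (hfun p c x - hfun p c (-1)) / (x + 1)) \<longlongrightarrow> hder p c (-1)) (at_right (-1))"
  proof (rule lhopital_right[where f' = "hder p c" and g' = "\<lambda>x. 1"])
    have "(hfun p c \<longlongrightarrow> hfun p c (-1)) (at_right (-1))"
      using p by (intro continuous_on_Icc_at_rightD[where b = 1] hfun_continuous_on) auto
    then show "((\<lambda>x. hfun p c x - hfun p c (-1)) \<longlongrightarrow> 0) (at_right (-1))"
      using tendsto_diff[OF _ tendsto_const[of "hfun p c (-1)"]] by fastforce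
    show "((\<lambda>x. x + 1) \<longlongrightarrow> 0) (at_right (-1::real))"
      by (auto intro!: tendsto_eq_intros tendsto_ident_at)
    show "eventually (\<lambda>x. x + 1 \<noteq> 0) (at_right (-1::real))"
      using ev by eventually_elim auto
    show "eventually (\<lambda>x. 1 \<noteq> (0::real)) (at_right (-1::real))" by simp
    show "eventually (\<lambda>x. ((\<lambda>x. hfun p c x - hfun p c (-1)) has_real_derivative hder p c x) (at x))
        (at_right (-1))"
      using ev by eventually_elim (auto intro!: derivative_eq_intros hfun_has_deriv)
    show "eventually (\<lambda>x. ((\<lambda>x. x + 1) has_real_derivative 1) (at x)) (at_right (-1::real))"
      by (intro always_eventually allI) (auto intro!: derivative_eq_intros)
    show "filterlim (\<lambda>x. hder p c x / 1) (nhds (hder p c (-1))) (at_right (-1))"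
      using continuous_on_Icc_at_rightD[OF hder_continuous_on[OF p]] by simp
  qed
  then show ?thesis
    by (simp add: has_field_derivative_iff at_within_Icc_at_right)
qed

lemma hfun_has_deriv_within:
  "p > 1 \<Longrightarrow> -1 \<le> s \<Longrightarrow> s < 1 \<Longrightarrow> (hfun p c has_real_derivative hder p c s) (at s within {-1..1})"
  using hfun_has_deriv_minus_1[of p c] has_field_derivative_at_within[OF hfun_has_deriv[of s p c]]
  by (cases "s = -1") auto

text \<open>The homogeneous extension of \<open>hfun\<close> is the obstacle \<open>y^p - c^p x^p\<close>; hence any
  majorant of \<open>hfun\<close> on \<open>[-1,1]\<close> extends to a majorant of the obstacle.\<close>
lemma homogeneous_lower_bound:
  fixes g :: "real \<Rightarrow> real"
  assumes ge: "\<forall>s\<in>{-1..1}. g s \<ge> hfun p c s" and xy: "x \<ge> 0" "y \<ge> 0" "(x, y) \<noteq> (0, 0)"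
  shows "(x + y) powr p * g ((y - x) / (x + y)) \<ge> y powr p - c powr p * x powr p"
proof -
  define U where "U = x + y"
  define s where "s = (y - x) / (x + y)"
  have U: "U > 0" using xy by (auto simp: U_def)
  have s: "s \<in> {-1..1}" using xy U unfolding s_def U_def by (auto simp: divide_le_eq le_divide_eq)
  have e: "(1 + s) / 2 = y / U" "(1 - s) / 2 = x / U"
    using U by (auto simp: s_def U_def field_simps)
  have "U powr p * hfun p c s = y powr p - c powr p * x powr p"
    unfolding hfun_def e using xy U by (simp add: powr_divide field_simps)
  moreover have "U powr p * hfun p c s \<le> U powr p * g s"
    using ge s U by (intro mult_left_mono) auto
  ultimately show ?thesis by (simp add: U_def s_def)
qed

locale legendre_tail =
  fixes p z :: real and L :: "real \<Rightarrow> real"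
  assumes p_gt: "p > 2"
    and L_deriv: "\<And>s. -1 < s \<Longrightarrow> s < 1 \<Longrightarrow> (L has_real_derivative deriv L s) (at s)"
    and L_deriv2: "\<And>s. -1 < s \<Longrightarrow> s < 1 \<Longrightarrow> (deriv L has_real_derivative deriv (deriv L) s) (at s)"
    and L_ode: "\<And>s. -1 < s \<Longrightarrow> s < 1 \<Longrightarrow>
       (1 - s^2) * deriv (deriv L) s - 2 * s * deriv L s + p * L s = 0"
    and L_lim: "(L \<longlongrightarrow> 1) (at_left 1)" and L_at_1: "L 1 = 1"
    and z_gt: "-1 < z" and z_lt: "z < 1" and L_z: "L z = 0"
    and z_largest: "\<And>s. -1 < s \<Longrightarrow> s < 1 \<Longrightarrow> L s = 0 \<Longrightarrow> s \<le> z"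
begin

text \<open>The flux \<open>(1-s\<^sup>2)L'\<close>; the Legendre equation says exactly that its derivative is \<open>-pL\<close>.\<close>
definition flux :: "real \<Rightarrow> real" where
  "flux s = (1 - s^2) * deriv L s"

lemma flux_has_deriv: "-1 < s \<Longrightarrow> s < 1 \<Longrightarrow> (flux has_real_derivative (- p * L s)) (at s)"
proof -
  assume s: "-1 < s" "s < 1"
  have "(flux has_real_derivative (- (2 * s)) * deriv L s + (1 - s^2) * deriv (deriv L) s) (at s)"
    unfolding flux_def[abs_def] by (rule derivative_eq_intros refl L_deriv2 s)+ simp
  moreover have "(- (2 * s)) * deriv L s + (1 - s^2) * deriv (deriv L) s = - p * L s"
    using L_ode[OF s] by (simp add: algebra_simps)
  ultimately show ?thesis by simp
qed

lemma deriv_L_eq_flux: "-1 < s \<Longrightarrow> s < 1 \<Longrightarrow> deriv L s = flux s / (1 - s^2)"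
  using one_minus_square_pos[of s] by (simp add: flux_def)

lemma L_pos: assumes s: "z < s" "s < 1" shows "L s > 0"
proof (rule ccontr)
  assume nonpos: "\<not> L s > 0"
  have "eventually (\<lambda>x. L x > 1/2) (at_left 1)"
    using order_tendstoD(1)[OF L_lim, of "1/2"] by simp
  moreover have "eventually (\<lambda>x. x \<in> {s<..<1}) (at_left 1)"
    using eventually_at_left_real[OF s(2)] .
  ultimately have "eventually (\<lambda>x. L x > 1/2 \<and> x \<in> {s<..<1}) (at_left 1)"
    by eventually_elim auto
  from eventually_happens[OF this] obtain t where t: "L t > 1/2" "s < t" "t < 1"
    by auto
  have "\<exists>x\<ge>s. x \<le> t \<and> L x = 0"
    by (rule IVT) (use nonpos t s z_gt in \<open>auto intro!: DERIV_isCont[OF L_deriv]\<close>)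
  then obtain x where "s \<le> x" "x \<le> t" "L x = 0" by blast
  with z_largest[of x] s t z_gt show False by auto
qed

text \<open>As \<open>L \<ge> 0\<close> on \<open>[z,1)\<close>, the flux is nonincreasing there.\<close>
lemma flux_antimono: assumes "z \<le> s" "s \<le> t" "t < 1" shows "flux t \<le> flux s"
proof (rule DERIV_nonpos_imp_nonincreasing[OF assms(2)])
  fix x assume "s \<le> x" "x \<le> t"
  then show "\<exists>y. (flux has_real_derivative y) (at x) \<and> y \<le> 0"
    using flux_has_deriv[of x] L_pos[of x] assms z_gt p_gt L_z
    by (intro exI[of _ "- p * L x"]) (cases "x = z"; auto)
qed

text \<open>If the flux were negative somewhere right of \<open>z\<close>, it would stay below that value,
  forcing \<open>L' \<le> -e/(1-s)\<close> and contradicting the finite limit \<open>L(1-) = 1\<close>.\<close>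
lemma flux_nonneg: assumes t: "z < t" "t < 1" shows "flux t \<ge> 0"
proof (rule ccontr)
  assume "\<not> flux t \<ge> 0"
  then have neg: "flux t < 0" by simp
  show False
  proof (rule no_limit_under_logarithmic_growth[of t "- flux t / 2" "\<lambda>x. - L x" "\<lambda>x. - deriv L x"])
    show "t < 1" "0 < - flux t / 2" using t neg by auto
    show "((\<lambda>x. - L x) \<longlongrightarrow> - 1) (at_left 1)" using L_lim by (intro tendsto_intros)
    fix s assume s: "t < s" "s < 1"
    have s1: "-1 < s" using s t z_gt by simp
    show "((\<lambda>x. - L x) has_real_derivative - deriv L s) (at s)"
      using s s1 by (auto intro!: derivative_eq_intros L_deriv)
    have "- flux t / 2 / (1 - s) \<le> - flux t / (1 - s^2)"
      using neg s s1 by (intro divide_one_minus_square_ge) auto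
    also have "\<dots> \<le> - flux s / (1 - s^2)"
      using flux_antimono[of t s] s t one_minus_square_pos[OF s1 s(2)] by (intro divide_right_mono) auto
    also have "\<dots> = - deriv L s" using deriv_L_eq_flux[OF s1 s(2)] by simp
    finally show "- flux t / 2 / (1 - s) \<le> - deriv L s" .
  qed
qed

lemma flux_pos: assumes t: "z \<le> t" "t < 1" shows "flux t > 0"
proof -
  define t' where "t' = (t + 1) / 2"
  have t': "t < t'" "t' < 1" "z < t'" using t by (auto simp: t'_def)
  have "flux t' < flux t"
  proof (rule DERIV_neg_imp_decreasing_open[OF t'(1)])
    fix x assume x: "t < x" "x < t'"
    show "\<exists>y. (flux has_real_derivative y) (at x) \<and> y < 0"
      using flux_has_deriv[of x] L_pos[of x] x t t' z_gt p_gt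
      by (intro exI[of _ "- p * L x"]) auto
  next
    show "continuous_on {t..t'} flux"
      using t t' z_gt by (intro continuous_at_imp_continuous_on ballI DERIV_isCont[OF flux_has_deriv]) auto
  qed
  with flux_nonneg[OF t'(3,2)] show ?thesis by simp
qed

lemma deriv_L_pos: "z \<le> t \<Longrightarrow> t < 1 \<Longrightarrow> deriv L t > 0"
  using flux_pos[of t] one_minus_square_pos[of t] z_gt by (simp add: deriv_L_eq_flux)

text \<open>The flux vanishes at \<open>1\<close>: otherwise \<open>L' \<ge> e/(1-s)\<close> near \<open>1\<close>, again contradicting
  \<open>L(1-) = 1\<close>.\<close>
lemma flux_tendsto_0: "(flux \<longlongrightarrow> 0) (at_left 1)"
proof (rule order_tendstoI)
  fix e :: real assume "e < 0"
  show "eventually (\<lambda>x. e < flux x) (at_left 1)"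
    using eventually_at_left_real[OF z_lt]
    by eventually_elim (use flux_nonneg \<open>e < 0\<close> in force)
next
  fix e :: real assume e: "0 < e"
  have "\<exists>s1. z < s1 \<and> s1 < 1 \<and> flux s1 < e"
  proof (rule ccontr)
    assume "\<not> ?thesis"
    then have ge: "flux s \<ge> e" if "z < s" "s < 1" for s using that by force
    show False
    proof (rule no_limit_under_logarithmic_growth[OF z_lt _ _ _ L_lim, of "e/2" "deriv L"])
      show "e/2 > 0" using e by simp
      fix s assume s: "z < s" "s < 1"
      have s1: "-1 < s" using s z_gt by simp
      show "(L has_real_derivative deriv L s) (at s)" using s s1 by (intro L_deriv) auto
      have "e / 2 / (1 - s) \<le> e / (1 - s^2)"
        using e s s1 by (intro divide_one_minus_square_ge) auto
      also have "\<dots> \<le> flux s / (1 - s^2)"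
        using ge[OF s] one_minus_square_pos[OF s1 s(2)] by (intro divide_right_mono) auto
      also have "\<dots> = deriv L s" using deriv_L_eq_flux[OF s1 s(2)] by simp
      finally show "e / 2 / (1 - s) \<le> deriv L s" .
    qed
  qed
  then obtain s1 where s1: "z < s1" "s1 < 1" "flux s1 < e" by blast
  show "eventually (\<lambda>x. flux x < e) (at_left 1)"
    using eventually_at_left_real[OF s1(2)]
  proof eventually_elim
    case (elim x)
    then have "flux x \<le> flux s1" using s1 by (intro flux_antimono) auto
    then show ?case using s1 by simp
  qed
qed

text \<open>By L'Hopital, \<open>L'(1-) = lim flux(s)/(1-s^2) = p/2\<close>; so \<open>L\<close> is differentiable at \<open>1\<close>.\<close>
lemma deriv_L_tendsto: "(deriv L \<longlongrightarrow> p / 2) (at_left 1)"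
proof -
  have ev01: "eventually (\<lambda>x. x \<in> {0<..<1}) (at_left (1::real))"
    by (rule eventually_at_left_real) simp
  have "((\<lambda>x. flux x / (1 - x)) \<longlongrightarrow> p) (at_left 1)"
  proof (rule lhopital_left[where f' = "\<lambda>x. - p * L x" and g' = "\<lambda>x. -1"])
    show "(flux \<longlongrightarrow> 0) (at_left 1)" by (rule flux_tendsto_0)
    show "((\<lambda>x. 1 - x) \<longlongrightarrow> 0) (at_left (1::real))"
      using tendsto_diff[OF tendsto_const[of 1] tendsto_ident_at[of 1 "{..<1}"]] by simp
    show "eventually (\<lambda>x. 1 - x \<noteq> 0) (at_left (1::real))"
      using ev01 by eventually_elim auto
    show "eventually (\<lambda>x. - 1 \<noteq> (0::real)) (at_left (1::real))" by simp
    show "eventually (\<lambda>x. (flux has_real_derivative (- p * L x)) (at x)) (at_left 1)"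
      using ev01 by eventually_elim (use flux_has_deriv in auto)
    show "eventually (\<lambda>x. ((\<lambda>x. 1 - x) has_real_derivative (-1)) (at x)) (at_left (1::real))"
      by (intro always_eventually allI) (auto intro!: derivative_eq_intros)
    show "filterlim (\<lambda>x. - p * L x / - 1) (nhds p) (at_left 1)"
      using tendsto_mult[OF tendsto_const[of p] L_lim] by simp
  qed
  then have "((\<lambda>x. flux x / (1 - x) / (1 + x)) \<longlongrightarrow> p / 2) (at_left 1)"
    using tendsto_divide[OF _ tendsto_add[OF tendsto_const[of 1] tendsto_ident_at[of 1 "{..<1}"]]]
    by fastforce
  then show ?thesis
  proof (rule Lim_transform_eventually)
    show "eventually (\<lambda>x. flux x / (1 - x) / (1 + x) = deriv L x) (at_left 1)"
      using ev01 by eventually_elim (auto simp: deriv_L_eq_flux power2_eq_square field_simps)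
  qed
qed

lemma L_has_deriv_at_1: "(L has_real_derivative p / 2) (at 1 within {-1..1})"
proof -
  have ev01: "eventually (\<lambda>x. x \<in> {0<..<1}) (at_left (1::real))"
    by (rule eventually_at_left_real) simp
  have "((\<lambda>x. (L x - 1) / (x - 1)) \<longlongrightarrow> p / 2) (at_left 1)"
  proof (rule lhopital_left[where f' = "deriv L" and g' = "\<lambda>x. 1"])
    show "((\<lambda>x. L x - 1) \<longlongrightarrow> 0) (at_left 1)"
      using tendsto_diff[OF L_lim tendsto_const[of 1]] by simp
    show "((\<lambda>x. x - 1) \<longlongrightarrow> 0) (at_left (1::real))"
      using tendsto_diff[OF tendsto_ident_at[of 1 "{..<1}"] tendsto_const[of 1]] by simp
    show "eventually (\<lambda>x. x - 1 \<noteq> 0) (at_left (1::real))"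
      using ev01 by eventually_elim auto
    show "eventually (\<lambda>x. 1 \<noteq> (0::real)) (at_left (1::real))" by simp
    show "eventually (\<lambda>x. ((\<lambda>x. L x - 1) has_real_derivative deriv L x) (at x)) (at_left 1)"
      using ev01 by eventually_elim (auto intro!: derivative_eq_intros L_deriv)
    show "eventually (\<lambda>x. ((\<lambda>x. x - 1) has_real_derivative 1) (at x)) (at_left (1::real))"
      by (intro always_eventually allI) (auto intro!: derivative_eq_intros)
    show "filterlim (\<lambda>x. deriv L x / 1) (nhds (p / 2)) (at_left 1)"
      using deriv_L_tendsto by simp
  qed
  then show ?thesis
    by (simp add: has_field_derivative_iff at_within_Icc_at_left L_at_1)
qed

definition Lder :: "real \<Rightarrow> real" where
  "Lder s = (if s = 1 then p / 2 else deriv L s)"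

lemma Lder_continuous_on: "continuous_on {z..1} Lder"
  unfolding continuous_on_eq_continuous_within
proof
  fix s assume s: "s \<in> {z..1}"
  show "continuous (at s within {z..1}) Lder"
  proof (cases "s = 1")
    case True
    have "(Lder \<longlongrightarrow> Lder 1) (at_left 1)"
    proof (rule Lim_transform_eventually)
      show "(deriv L \<longlongrightarrow> Lder 1) (at_left 1)" using deriv_L_tendsto by (simp add: Lder_def)
      show "eventually (\<lambda>x. deriv L x = Lder x) (at_left 1)"
        using eventually_at_left_real[OF z_lt] by eventually_elim (auto simp: Lder_def)
    qed
    then show ?thesis unfolding True continuous_within using z_lt by (simp add: at_within_Icc_at_left)
  next
    case False
    then have s1: "-1 < s" "s < 1" using s z_gt by auto
    have "eventually (\<lambda>x. x \<in> {..<1}) (nhds s)"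
      using s1 by (intro eventually_nhds_in_open) auto
    then have "eventually (\<lambda>x. deriv L x = Lder x) (nhds s)"
      by eventually_elim (simp add: Lder_def)
    then have "isCont Lder s" using DERIV_isCont[OF L_deriv2[OF s1]] isCont_cong by blast
    then show ?thesis by (rule continuous_at_imp_continuous_at_within)
  qed
qed

lemma L_has_Lder: "-1 < s \<Longrightarrow> s \<le> 1 \<Longrightarrow> (L has_real_derivative Lder s) (at s within {-1..1})"
  using L_has_deriv_at_1 has_field_derivative_at_within[OF L_deriv[of s]]
  by (cases "s = 1") (auto simp: Lder_def)

text \<open>Right of \<open>z\<close> the Legendre function satisfies \<open>pL - 2sL' \<le> 0\<close>: the quantity
  \<open>(1-s^2)(pL - 2sL')\<close> has derivative \<open>(p-2) flux \<ge> 0\<close> and vanishes at \<open>1\<close>.\<close>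
lemma L_K_bound: assumes s: "z < s" "s < 1" shows "p * L s - 2 * s * deriv L s \<le> 0"
proof -
  define R where "R t = p * (1 - t^2) * L t - 2 * t * flux t" for t
  have "R s \<le> 0"
  proof (rule nonpos_if_nondecreasing_to_zero[OF s(2), where f' = "\<lambda>t. (p - 2) * flux t"])
    fix t assume t: "s \<le> t" "t < 1"
    then have t1: "-1 < t" using s z_gt by simp
    have "(R has_real_derivative p * (- (2 * t)) * L t + p * (1 - t^2) * deriv L t
        - (2 * flux t + 2 * t * (- p * L t))) (at t)"
      unfolding R_def[abs_def] using t t1
      by (auto intro!: derivative_eq_intros L_deriv flux_has_deriv simp: algebra_simps)
    then show "(R has_real_derivative (p - 2) * flux t) (at t)"
      by (simp add: flux_def algebra_simps)
    show "(p - 2) * flux t \<ge> 0" using flux_pos[of t] t s p_gt by simp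
  next
    have "(R \<longlongrightarrow> p * (1 - 1^2) * 1 - 2 * 1 * 0) (at_left 1)"
      unfolding R_def[abs_def] by (intro tendsto_intros L_lim flux_tendsto_0)
    then show "(R \<longlongrightarrow> 0) (at_left 1)" by simp
  qed
  moreover have "R s = (1 - s^2) * (p * L s - 2 * s * deriv L s)"
    by (simp add: R_def flux_def algebra_simps)
  moreover have "1 - s^2 > 0" using one_minus_square_pos s z_gt by auto
  ultimately show ?thesis by (simp add: mult_le_0_iff)
qed

end

text \<open>The barrier parameters: \<open>c\<close> puts the zero of \<open>h\<close> at \<open>z\<close>, \<open>a\<close> matches the slopes at \<open>z\<close>.\<close>
locale barrier = legendre_tail +
  fixes c a :: real
  assumes c_def: "c = (1 + z) / (1 - z)"
    and a_def: "a = deriv (hfun p c) z / deriv L z"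
begin

lemma hfun_at_z: "hfun p c z = 0"
  using hfun_zero[OF z_gt z_lt] by (simp add: c_def)

lemma hder_at_z: "hder p c z = a * deriv L z"
  using DERIV_imp_deriv[OF hfun_has_deriv[OF z_gt z_lt]] deriv_L_pos[of z] z_lt
  by (simp add: a_def)

lemma a_pos: "a > 0"
  using hder_pos[of p z c] hder_at_z deriv_L_pos[of z] p_gt z_gt z_lt
  by (simp add: zero_less_mult_iff)

text \<open>Since \<open>L\<close> solves \<open>D L = 0\<close>, its
  derivative is \<open>L \<cdot> D h\<close>, and \<open>D h\<close> has the sign of \<open>hcore\<close>.\<close>
definition wronskian :: "real \<Rightarrow> real" where
  "wronskian s = (1 - s^2) * L s * hder p c s - flux s * hfun p c s"

lemma wronskian_has_deriv:
  assumes s: "-1 < s" "s < 1"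
  shows "(wronskian has_real_derivative L s * (p^2 * ((1 + s) / 2) * ((1 - s) / 2) * hcore p c s)) (at s)"
proof -
  have "(wronskian has_real_derivative
     (- (2 * s)) * L s * hder p c s + (1 - s^2) * deriv L s * hder p c s + (1 - s^2) * L s * hder2 p c s
       - ((- p * L s) * hfun p c s + flux s * hder p c s)) (at s)"
    unfolding wronskian_def[abs_def] using s
    by (auto intro!: derivative_eq_intros L_deriv hder_has_deriv flux_has_deriv hfun_has_deriv
        simp: algebra_simps)
  moreover have "(- (2 * s)) * L s * hder p c s + (1 - s^2) * deriv L s * hder p c s
       + (1 - s^2) * L s * hder2 p c s - ((- p * L s) * hfun p c s + flux s * hder p c s)
     = L s * Dcoef p s (hfun p c s) (hder p c s) (hder2 p c s)"
    by (simp add: flux_def Dcoef_def algebra_simps)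
  ultimately show ?thesis by (simp only: hfun_coefficients(1)[OF s])
qed

text \<open>\<open>W\<close> tends to \<open>0\<close> at \<open>1\<close>, because the factor \<open>1-s\<^sup>2\<close> and the flux do; also \<open>W(z) = 0\<close>.\<close>
lemma wronskian_tendsto_0: "(wronskian \<longlongrightarrow> 0) (at_left 1)"
proof -
  have "(wronskian \<longlongrightarrow> (1 - 1^2) * 1 * hder p c 1 - 0 * 1) (at_left 1)"
    unfolding wronskian_def[abs_def] using p_gt
    by (intro tendsto_intros L_lim continuous_on_Icc_at_leftD[OF hder_continuous_on] flux_tendsto_0
        hfun_tendsto_1) auto
  then show ?thesis by simp
qed

lemma wronskian_deriv_sign:
  assumes "z \<le> x" "x < 1"
  shows "hcore p c x > 0 \<Longrightarrow> x \<noteq> z \<Longrightarrow> L x * (p^2 * ((1 + x) / 2) * ((1 - x) / 2) * hcore p c x) > 0"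
    and "hcore p c x \<le> 0 \<Longrightarrow> L x * (p^2 * ((1 + x) / 2) * ((1 - x) / 2) * hcore p c x) \<le> 0"
proof -
  show "hcore p c x > 0 \<Longrightarrow> x \<noteq> z \<Longrightarrow> L x * (p^2 * ((1 + x) / 2) * ((1 - x) / 2) * hcore p c x) > 0"
    using L_pos[of x] assms z_gt p_gt by (intro mult_pos_pos) auto
  show "hcore p c x \<le> 0 \<Longrightarrow> L x * (p^2 * ((1 + x) / 2) * ((1 - x) / 2) * hcore p c x) \<le> 0"
    using L_pos[of x] L_z assms z_gt p_gt by (cases "x = z") (auto intro!: mult_nonneg_nonpos)
qed

text \<open>Where \<open>hcore > 0\<close> it stays positive up to \<open>1\<close>, so \<open>W\<close> increases to its limit \<open>0\<close>.\<close>
lemma wronskian_nonpos_where_core_pos: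
  assumes s: "z < s" "s < 1" and core: "hcore p c s > 0"
  shows "wronskian s \<le> 0"
proof (rule nonpos_if_nondecreasing_to_zero[OF s(2) wronskian_has_deriv _ wronskian_tendsto_0])
  fix t assume t: "s \<le> t" "t < 1"
  have "hcore p c t > 0"
    using core hcore_strict_mono[OF p_gt, of s t c] t s z_gt by (cases "s = t") auto
  then show "L t * (p^2 * ((1 + t) / 2) * ((1 - t) / 2) * hcore p c t) \<ge> 0"
    using wronskian_deriv_sign(1)[of t] t s by (auto simp: less_imp_le)
qed (use s z_gt in auto)

text \<open>\<open>hcore\<close> is negative at \<open>z\<close>: otherwise it would be positive on \<open>(z,1)\<close>, so the Wronskian
  would increase strictly from \<open>W(z) = 0\<close>, contradicting \<open>W \<le> 0\<close> there.\<close>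
lemma hcore_at_z_neg: "hcore p c z < 0"
proof (rule ccontr)
  assume "\<not> hcore p c z < 0"
  then have core_pos: "hcore p c x > 0" if "z < x" "x < 1" for x
    using hcore_strict_mono[OF p_gt z_gt, of x c] that by auto
  define t where "t = (z + 1) / 2"
  have t: "z < t" "t < 1" using z_lt by (auto simp: t_def)
  have "wronskian z < wronskian t"
  proof (rule DERIV_pos_imp_increasing_open[OF t(1)])
    fix x assume x: "z < x" "x < t"
    show "\<exists>y. (wronskian has_real_derivative y) (at x) \<and> y > 0"
      using wronskian_has_deriv[of x] wronskian_deriv_sign(1)[of x] core_pos[of x] x t z_gt by auto
  next
    show "continuous_on {z..t} wronskian"
      using t z_gt by (intro continuous_at_imp_continuous_on ballI DERIV_isCont[OF wronskian_has_deriv]) auto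
  qed
  moreover have "wronskian t \<le> 0" using wronskian_nonpos_where_core_pos[OF t core_pos[OF t]] .
  ultimately show False by (simp add: wronskian_def L_z hfun_at_z)
qed

text \<open>\<open>W \<le> 0\<close> on \<open>(z,1)\<close>: where \<open>hcore \<le> 0\<close>, \<open>W\<close> decreases from \<open>W(z) = 0\<close>.\<close>
lemma wronskian_nonpos: assumes s: "z < s" "s < 1" shows "wronskian s \<le> 0"
proof (cases "hcore p c s > 0")
  case True then show ?thesis using wronskian_nonpos_where_core_pos[OF s] by simp
next
  case False
  have "wronskian s \<le> wronskian z"
  proof (rule DERIV_nonpos_imp_nonincreasing[of z s])
    show "z \<le> s" using s by simp
    fix x assume x: "z \<le> x" "x \<le> s"
    have "hcore p c x \<le> 0"
      using False hcore_strict_mono[OF p_gt, of x s c] x s z_gt by (cases "x = s") auto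
    then show "\<exists>y. (wronskian has_real_derivative y) (at x) \<and> y \<le> 0"
      using wronskian_has_deriv[of x] wronskian_deriv_sign(2)[of x] x s z_gt by auto
  qed
  then show ?thesis by (simp add: wronskian_def L_z hfun_at_z)
qed

text \<open>Since \<open>(h/L)' = W / ((1-s\<^sup>2) L\<^sup>2) \<le> 0\<close> on \<open>(z,1)\<close>,
  \<open>h/L\<close> is bounded by its limit \<open>h'(z)/L'(z) = a\<close> at \<open>z\<close>.\<close>
lemma hfun_le_aL: assumes s: "z < s" "s < 1" shows "hfun p c s \<le> a * L s"
proof -
  define r where "r t = hfun p c t / L t" for t
  have r_antimono: "r s \<le> r t" if t: "z < t" "t \<le> s" for t
  proof (rule DERIV_nonpos_imp_nonincreasing[OF t(2)])
    fix x assume x: "t \<le> x" "x \<le> s"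
    have x1: "-1 < x" "x < 1" "z < x" using x t s z_gt by auto
    have Lx: "L x > 0" using L_pos x1 by auto
    have "(r has_real_derivative (hder p c x * L x - hfun p c x * deriv L x) / (L x * L x)) (at x)"
      unfolding r_def[abs_def] using Lx
      by (auto intro!: derivative_eq_intros hfun_has_deriv L_deriv x1)
    moreover have "hder p c x * L x - hfun p c x * deriv L x = wronskian x / (1 - x^2)"
      using one_minus_square_pos[OF x1(1,2)] by (simp add: wronskian_def flux_def field_simps)
    then have "(hder p c x * L x - hfun p c x * deriv L x) / (L x * L x) \<le> 0"
      using wronskian_nonpos[OF x1(3,2)] one_minus_square_pos[OF x1(1,2)] Lx
      by (simp add: divide_nonpos_pos)
    ultimately show "\<exists>y. (r has_real_derivative y) (at x) \<and> y \<le> 0" by blast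
  qed
  have "((\<lambda>y. (hfun p c y - hfun p c z) / (y - z)) \<longlongrightarrow> hder p c z) (at_right z)"
    using has_field_derivative_at_within[OF hfun_has_deriv[OF z_gt z_lt, of p c], of "{z<..}"]
    by (simp add: has_field_derivative_iff)
  moreover have "((\<lambda>y. (L y - L z) / (y - z)) \<longlongrightarrow> deriv L z) (at_right z)"
    using has_field_derivative_at_within[OF L_deriv[OF z_gt z_lt], of "{z<..}"]
    by (simp add: has_field_derivative_iff)
  ultimately have "((\<lambda>y. ((hfun p c y - hfun p c z) / (y - z)) / ((L y - L z) / (y - z))) \<longlongrightarrow> a) (at_right z)"
    using tendsto_divide deriv_L_pos[of z] z_lt hder_at_z by fastforce
  then have r_lim: "(r \<longlongrightarrow> a) (at_right z)"
  proof (rule Lim_transform_eventually)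
    show "eventually (\<lambda>y. ((hfun p c y - hfun p c z) / (y - z)) / ((L y - L z) / (y - z)) = r y) (at_right z)"
      using eventually_at_right_real[OF z_lt] by eventually_elim (auto simp: r_def hfun_at_z L_z)
  qed
  have "eventually (\<lambda>y. r s \<le> r y) (at_right z)"
    using eventually_at_right_real[OF s(1)] by eventually_elim (use r_antimono in auto)
  from tendsto_le[OF trivial_limit_at_right_real r_lim tendsto_const this]
  have "r s \<le> a" .
  then show ?thesis using L_pos[OF s] by (simp add: r_def divide_le_eq)
qed

text \<open>Comparing the limits at \<open>1\<close> gives \<open>a = a L(1) \<ge> h(1) = 1\<close>.\<close>
lemma a_ge_1: "a \<ge> 1"
proof -
  have "((\<lambda>s. a * L s) \<longlongrightarrow> a * 1) (at_left 1)" by (intro tendsto_intros L_lim)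
  moreover have "eventually (\<lambda>s. hfun p c s \<le> a * L s) (at_left 1)"
    using eventually_at_left_real[OF z_lt] by eventually_elim (use hfun_le_aL in auto)
  moreover have "(hfun p c \<longlongrightarrow> 1) (at_left 1)" using p_gt by (intro hfun_tendsto_1) simp
  ultimately show ?thesis using tendsto_le[OF trivial_limit_at_left_real] by force
qed

definition gfun :: "real \<Rightarrow> real" where
  "gfun s = (if z \<le> s then a * L s else hfun p c s)"

definition gder :: "real \<Rightarrow> real" where
  "gder s = (if z \<le> s then a * Lder s else hder p c s)"

text \<open>At \<open>z\<close> both pieces vanish and their derivatives agree by the choice of \<open>a\<close>.\<close>
lemma gfun_has_deriv_at_z: "(gfun has_real_derivative a * deriv L z) (at z)"
proof -
  have "((\<lambda>y. (hfun p c y - hfun p c z) / (y - z)) \<longlongrightarrow> a * deriv L z) (at_left z)"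
    using has_field_derivative_at_within[OF hfun_has_deriv[OF z_gt z_lt, of p c], of "{..<z}"]
    by (simp add: has_field_derivative_iff hder_at_z)
  then have "((\<lambda>y. (gfun y - gfun z) / (y - z)) \<longlongrightarrow> a * deriv L z) (at_left z)"
  proof (rule Lim_transform_eventually)
    show "eventually (\<lambda>y. (hfun p c y - hfun p c z) / (y - z) = (gfun y - gfun z) / (y - z)) (at_left z)"
      using eventually_at_left_real[OF z_gt] by eventually_elim (auto simp: gfun_def hfun_at_z L_z)
  qed
  moreover have "((\<lambda>y. a * ((L y - L z) / (y - z))) \<longlongrightarrow> a * deriv L z) (at_right z)"
    using has_field_derivative_at_within[OF L_deriv[OF z_gt z_lt], of "{z<..}"]
    by (intro tendsto_intros) (simp add: has_field_derivative_iff)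
  then have "((\<lambda>y. (gfun y - gfun z) / (y - z)) \<longlongrightarrow> a * deriv L z) (at_right z)"
  proof (rule Lim_transform_eventually)
    show "eventually (\<lambda>y. a * ((L y - L z) / (y - z)) = (gfun y - gfun z) / (y - z)) (at_right z)"
      using eventually_at_right_real[OF z_lt] by eventually_elim (auto simp: gfun_def L_z)
  qed
  ultimately show ?thesis
    by (simp add: has_field_derivative_iff filterlim_at_split)
qed

lemma gfun_has_deriv: "s \<in> {-1..1} \<Longrightarrow> (gfun has_real_derivative gder s) (at s within {-1..1})"
proof -
  assume s: "s \<in> {-1..1}"
  consider "s < z" | "s = z" | "z < s" by linarith
  then show ?thesis
  proof cases
    case 1
    show ?thesis
    proof (rule has_field_derivative_transform_within)
      show "(hfun p c has_real_derivative gder s) (at s within {-1..1})"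
        using hfun_has_deriv_within[of p s c] s 1 p_gt z_lt by (simp add: gder_def)
      fix x :: real assume "x \<in> {-1..1}" "dist x s < z - s"
      then show "hfun p c x = gfun x" by (auto simp: gfun_def dist_real_def)
    qed (use s 1 in auto)
  next
    case 2
    then show ?thesis using gfun_has_deriv_at_z z_lt
      by (auto simp: gder_def Lder_def intro: has_field_derivative_at_within)
  next
    case 3
    show ?thesis
    proof (rule has_field_derivative_transform_within)
      show "((\<lambda>x. a * L x) has_real_derivative gder s) (at s within {-1..1})"
        using DERIV_cmult[OF L_has_Lder[of s], of a] s 3 z_gt by (simp add: gder_def)
      fix x :: real assume "x \<in> {-1..1}" "dist x s < s - z"
      then show "a * L x = gfun x" by (auto simp: gfun_def dist_real_def)
    qed (use s 3 in auto)
  qed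
qed

lemma gder_continuous_on: "continuous_on {-1..1} gder"
proof -
  have "continuous_on {-1..z} gder"
  proof (rule continuous_on_eq)
    show "continuous_on {-1..z} (hder p c)"
      using hder_continuous_on[of p c] p_gt z_lt by (auto elim: continuous_on_subset)
    show "\<And>s. s \<in> {-1..z} \<Longrightarrow> hder p c s = gder s"
      using z_lt by (auto simp: gder_def Lder_def hder_at_z)
  qed
  moreover have "continuous_on {z..1} (\<lambda>s. a * Lder s)"
    using Lder_continuous_on by (intro continuous_intros)
  then have "continuous_on {z..1} gder"
    by (rule continuous_on_eq) (simp add: gder_def)
  ultimately have "continuous_on ({-1..z} \<union> {z..1}) gder"
    by (intro continuous_on_closed_Un) auto
  moreover have "{-1..z} \<union> {z..1} = {-1..(1::real)}" using z_gt z_lt by auto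
  ultimately show ?thesis by simp
qed

lemma gfun_ge_hfun: "s \<in> {-1..1} \<Longrightarrow> gfun s \<ge> hfun p c s"
  using hfun_le_aL[of s] a_ge_1 L_at_1 L_z hfun_at_z
  by (cases "s < z"; cases "s = z"; cases "s = 1") (auto simp: gfun_def hfun_def)

lemma gfun_derivs_left:
  assumes s: "-1 < s" "s < z"
  shows "deriv gfun s = hder p c s" and "deriv (deriv gfun) s = hder2 p c s"
proof -
  have d1: "deriv gfun x = hder p c x" if "x \<in> {-1<..<z}" for x
    by (rule DERIV_imp_deriv, rule has_field_derivative_transform_within_open[OF hfun_has_deriv, of x "{-1<..<z}"])
      (use that z_lt in \<open>auto simp: gfun_def\<close>)
  then show "deriv gfun s = hder p c s" using s by simp
  show "deriv (deriv gfun) s = hder2 p c s"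
    by (rule DERIV_imp_deriv, rule has_field_derivative_transform_within_open[OF hder_has_deriv, of s "{-1<..<z}"])
      (use s z_lt d1 in auto)
qed

lemma gfun_derivs_right:
  assumes s: "z < s" "s < 1"
  shows "deriv gfun s = a * deriv L s" and "deriv (deriv gfun) s = a * deriv (deriv L) s"
proof -
  have d1: "deriv gfun x = a * deriv L x" if "x \<in> {z<..<1}" for x
  proof (rule DERIV_imp_deriv)
    have "((\<lambda>x. a * L x) has_real_derivative a * deriv L x) (at x)"
      using that z_gt by (auto intro!: derivative_eq_intros L_deriv)
    then show "(gfun has_real_derivative a * deriv L x) (at x)"
      by (rule has_field_derivative_transform_within_open[of _ _ _ "{z<..<1}"])
        (use that in \<open>auto simp: gfun_def\<close>)
  qed
  then show "deriv gfun s = a * deriv L s" using s by simp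
  have "((\<lambda>x. a * deriv L x) has_real_derivative a * deriv (deriv L) s) (at s)"
    using s z_gt by (auto intro!: derivative_eq_intros L_deriv2)
  then have "(deriv gfun has_real_derivative a * deriv (deriv L) s) (at s)"
    by (rule has_field_derivative_transform_within_open[of _ _ _ "{z<..<1}"]) (use s d1 in auto)
  then show "deriv (deriv gfun) s = a * deriv (deriv L) s" by (rule DERIV_imp_deriv)
qed

text \<open>Left of \<open>z\<close>: \<open>D h < 0\<close> (as \<open>hcore < 0\<close> there) and \<open>K h = 0\<close> identically.\<close>
lemma coefficients_left:
  assumes s: "-1 < s" "s < z"
  shows "Dcoef p s (hfun p c s) (hder p c s) (hder2 p c s) < 0"
    and "Kcoef p s (hfun p c s) (hder p c s) (hder2 p c s) = 0"
proof -
  have s1: "s < 1" using s z_lt by simp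
  have "hcore p c s < 0" using hcore_strict_mono[OF p_gt s z_lt, of c] hcore_at_z_neg by simp
  moreover have "p^2 * ((1 + s) / 2) * ((1 - s) / 2) > 0" using s s1 p_gt by auto
  ultimately show "Dcoef p s (hfun p c s) (hder p c s) (hder2 p c s) < 0"
    by (simp add: hfun_coefficients(1)[OF s(1) s1] mult_pos_neg)
  show "Kcoef p s (hfun p c s) (hder p c s) (hder2 p c s) = 0"
    by (rule hfun_coefficients(2)[OF s(1) s1])
qed

text \<open>Right of \<open>z\<close>: \<open>D (aL) = 0\<close> by the Legendre equation, and \<open>K (aL) = a p (pL - 2sL') \<le> 0\<close>.\<close>
lemma coefficients_right:
  assumes s: "z < s" "s < 1"
  shows "Dcoef p s (a * L s) (a * deriv L s) (a * deriv (deriv L) s) = 0"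
    and "Kcoef p s (a * L s) (a * deriv L s) (a * deriv (deriv L) s) \<le> 0"
proof -
  have ode: "(1 - s^2) * deriv (deriv L) s - 2 * s * deriv L s + p * L s = 0"
    using L_ode s z_gt by simp
  have "Dcoef p s (a * L s) (a * deriv L s) (a * deriv (deriv L) s)
      = a * ((1 - s^2) * deriv (deriv L) s - 2 * s * deriv L s + p * L s)"
    by (simp add: Dcoef_def algebra_simps)
  then show "Dcoef p s (a * L s) (a * deriv L s) (a * deriv (deriv L) s) = 0"
    using ode by simp
  have L'': "(1 - s^2) * deriv (deriv L) s = 2 * s * deriv L s - p * L s"
    using ode by linarith
  have "Kcoef p s (a * L s) (a * deriv L s) (a * deriv (deriv L) s)
      = a * (p * (p - 1) * L s - 2 * (p - 1) * s * deriv L s - (1 - s^2) * deriv (deriv L) s)"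
    by (simp add: Kcoef_def algebra_simps)
  also have "\<dots> = a * p * (p * L s - 2 * s * deriv L s)"
    unfolding L'' by (simp add: algebra_simps)
  also have "\<dots> \<le> 0" using L_K_bound[OF s] a_pos p_gt by (simp add: mult_nonneg_nonpos)
  finally show "Kcoef p s (a * L s) (a * deriv L s) (a * deriv (deriv L) s) \<le> 0" .
qed

lemma gfun_D_K_signs:
  assumes s: "-1 < s" "s < 1" "s \<noteq> z"
  shows "Dop p gfun s \<le> 0 \<and> Dop p gfun s / (1 - s^2) + Kop p gfun s \<le> 0"
proof (cases "s < z")
  case True
  then have "Dop p gfun s < 0" "Kop p gfun s = 0"
    using coefficients_left[OF s(1) True] s
    by (simp_all add: Dop_eq_Dcoef Kop_eq_Kcoef gfun_derivs_left gfun_def)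
  then show ?thesis using one_minus_square_pos[OF s(1,2)] by (simp add: divide_neg_pos less_imp_le)
next
  case False
  then have "z < s" using s by simp
  then have "Dop p gfun s = 0" "Kop p gfun s \<le> 0"
    using coefficients_right[OF _ s(2)] s
    by (simp_all add: Dop_eq_Dcoef Kop_eq_Kcoef gfun_derivs_right gfun_def)
  then show ?thesis by simp
qed

text \<open>The Hessian inequality for \<open>\<phi>\<close> where \<open>s < z\<close>: there \<open>g = h\<close>.\<close>
lemma gfun_hessian_form_nonpos_left:
  fixes h k :: "real^2"
  assumes xy: "x > 0" "y > 0" "ratio x y < z" and hk: "norm k \<le> norm h"
  shows "hessian_form (\<lambda>x y. (x + y) powr p * gfun ((y - x) / (x + y))) x y h k \<le> 0"
proof (rule hessian_form_nonpos[where I = "{-1<..<z}" and G = "hfun p c" and G' = "hder p c"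
      and G'' = "hder2 p c", OF _ _ _ _ _ _ _ _ _ xy(1,2) _ hk])
  fix s :: real assume "s \<in> {-1<..<z}"
  then have s: "-1 < s" "s < z" "s < 1" using z_lt by auto
  show "(hfun p c has_real_derivative hder p c s) (at s)" using hfun_has_deriv s by simp
  show "(hder p c has_real_derivative hder2 p c s) (at s)" using hder_has_deriv s by simp
  show "hder p c s \<ge> 0" using hder_pos[of p s c] s p_gt by simp
  show "Dcoef p s (hfun p c s) (hder p c s) (hder2 p c s) \<le> 0"
    using coefficients_left(1)[OF s(1,2)] by simp
  show "Kcoef p s (hfun p c s) (hder p c s) (hder2 p c s) \<le> 0"
    using coefficients_left(2)[OF s(1,2)] by simp
qed (use xy p_gt z_lt in \<open>auto simp: gfun_def ratio_def field_simps\<close>)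

text \<open>The Hessian inequality for \<open>\<phi>\<close> where \<open>s > z\<close>: there \<open>g = aL\<close>.\<close>
lemma gfun_hessian_form_nonpos_right:
  fixes h k :: "real^2"
  assumes xy: "x > 0" "y > 0" "z < ratio x y" and hk: "norm k \<le> norm h"
  shows "hessian_form (\<lambda>x y. (x + y) powr p * gfun ((y - x) / (x + y))) x y h k \<le> 0"
proof (rule hessian_form_nonpos[where I = "{z<..<1}" and G = "\<lambda>s. a * L s"
      and G' = "\<lambda>s. a * deriv L s" and G'' = "\<lambda>s. a * deriv (deriv L) s",
      OF _ _ _ _ _ _ _ _ _ xy(1,2) _ hk])
  fix s :: real assume "s \<in> {z<..<1}"
  then have s: "z < s" "s < 1" "-1 < s" using z_gt by auto
  show "((\<lambda>s. a * L s) has_real_derivative a * deriv L s) (at s)"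
    using s by (auto intro!: derivative_eq_intros L_deriv)
  show "((\<lambda>s. a * deriv L s) has_real_derivative a * deriv (deriv L) s) (at s)"
    using s by (auto intro!: derivative_eq_intros L_deriv2)
  show "a * deriv L s \<ge> 0" using a_pos deriv_L_pos[of s] s by simp
  show "Dcoef p s (a * L s) (a * deriv L s) (a * deriv (deriv L) s) \<le> 0"
    using coefficients_right(1)[OF s(1,2)] by simp
  show "Kcoef p s (a * L s) (a * deriv L s) (a * deriv (deriv L) s) \<le> 0"
    by (rule coefficients_right(2)[OF s(1,2)])
qed (use xy p_gt z_gt in \<open>auto simp: gfun_def ratio_def field_simps\<close>)

lemma gfun_hessian_form_nonpos:
  fixes h k :: "real^2"
  assumes "x > 0" "y > 0" "(y - x) / (x + y) \<noteq> z" "norm k \<le> norm h"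
  shows "hessian_form (\<lambda>x y. (x + y) powr p * gfun ((y - x) / (x + y))) x y h k \<le> 0"
  using gfun_hessian_form_nonpos_left[of x y k h] gfun_hessian_form_nonpos_right[of x y k h] assms
  by (cases "ratio x y < z") (auto simp: ratio_def)

end

lemma barrier_from_definitions:
  assumes p_def: "p = \<alpha> * (\<alpha> + 1)" and p_gt: "p > 2"
    and L: "is_Legendre_L \<alpha> L" and z: "is_largest_zero L z"
    and c_def: "c = (1 + z) / (1 - z)" and a_def: "a = deriv (hfun p c) z / deriv L z"
  shows "barrier p z L c a"
proof
  have Ld: "\<forall>s\<in>{-1<..<1}. L differentiable (at s) \<and> deriv L differentiable (at s) \<and>
        (1 - s^2) * deriv (deriv L) s - 2 * s * deriv L s + \<alpha> * (\<alpha> + 1) * L s = 0"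
    using L unfolding is_Legendre_L_def by auto
  fix s :: real assume s: "-1 < s" "s < 1"
  then show "(L has_real_derivative deriv L s) (at s)"
    and "(deriv L has_real_derivative deriv (deriv L) s) (at s)"
    and "(1 - s^2) * deriv (deriv L) s - 2 * s * deriv L s + p * L s = 0"
    using Ld by (auto simp: DERIV_deriv_iff_real_differentiable p_def)
  show "L s = 0 \<Longrightarrow> s \<le> z" using z s by (auto simp: is_largest_zero_def)
qed (use p_gt L z c_def a_def in \<open>auto simp: is_Legendre_L_def is_largest_zero_def\<close>)

theorem mainTheorem10:
  fixes \<alpha> p z c a :: real and L g :: "real \<Rightarrow> real" and \<phi> :: "real \<Rightarrow> real \<Rightarrow> real"
  assumes p_def: "p = \<alpha> * (\<alpha> + 1)" and p_gt: "p > 2"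
    and L: "is_Legendre_L \<alpha> L"
    and z: "is_largest_zero L z"
    and c_def: "c = (1 + z) / (1 - z)"
    and a_def: "a = deriv (hfun p c) z / deriv L z"
    and g_def: "g = (\<lambda>s. if z \<le> s then a * L s else hfun p c s)"
    and phi_def: "\<phi> = (\<lambda>x y. (x + y) powr p * g ((y - x) / (x + y)))"
  shows
    "(\<exists>g'. (\<forall>s\<in>{-1..1}. (g has_real_derivative g' s) (at s within {-1..1}))
           \<and> continuous_on {-1..1} g')
     \<and> (\<forall>s\<in>{-1..1}. g s \<ge> hfun p c s)
     \<and> (\<forall>s\<in>{-1<..<1}. s \<noteq> z \<longrightarrow>
          Dop p g s \<le> 0 \<and> Dop p g s / (1 - s^2) + Kop p g s \<le> 0)
     \<and> (\<forall>x y. x \<ge> 0 \<and> y \<ge> 0 \<and> (x, y) \<noteq> (0, 0) \<longrightarrow>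
          \<phi> x y \<ge> y powr p - c powr p * x powr p)
     \<and> (\<forall>x y. \<forall>h k :: real^2. x > 0 \<and> y > 0 \<and> (y - x) / (x + y) \<noteq> z \<and> norm k \<le> norm h \<longrightarrow>
          (let \<phi>x = (\<lambda>x' y'. deriv (\<lambda>t. \<phi> t y') x');
               \<phi>y = (\<lambda>x' y'. deriv (\<lambda>t. \<phi> x' t) y');
               \<phi>xx = deriv (\<lambda>t. \<phi>x t y) x;
               \<phi>yy = deriv (\<lambda>t. \<phi>y x t) y;
               \<phi>xy = deriv (\<lambda>t. \<phi>x x t) y
           in (\<phi>x x y / x + \<phi>xx) * (norm h)^2 + 2 * \<phi>xy * (h \<bullet> k)
              + (\<phi>yy + \<phi>y x y / y) * (norm k)^2 \<le> 0))"
proof -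
  interpret barrier p z L c a
    by (rule barrier_from_definitions[OF p_def p_gt L z c_def a_def])
  have g: "g = gfun" by (simp add: g_def gfun_def[abs_def])
  have phi: "\<phi> = (\<lambda>x y. (x + y) powr p * gfun ((y - x) / (x + y)))" by (simp add: phi_def g)
  have C1: "\<exists>g'. (\<forall>s\<in>{-1..1}. (g has_real_derivative g' s) (at s within {-1..1}))
           \<and> continuous_on {-1..1} g'"
    using gfun_has_deriv gder_continuous_on unfolding g by blast
  have majorant: "\<forall>s\<in>{-1..1}. g s \<ge> hfun p c s" using gfun_ge_hfun by (simp add: g)
  show ?thesis
    using C1 majorant gfun_D_K_signs homogeneous_lower_bound[OF majorant]
      gfun_hessian_form_nonpos[unfolded hessian_form_def]
    by (simp add: g phi)
qed

end
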